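(* Let $p$ be a prime, $G$ a Hausdorff topological group, and suppose $\gamma\in G$ has a topological $p$-Jordan decomposition $\gamma=\gamma_{ts}\gamma_{tu}$. Then: (1) if $\gamma=\gamma'_{ts}\gamma'_{tu}$ is also a topological $p$-Jordan decomposition, then $\gamma_{ts}=\gamma'_{ts}$ and $\gamma_{tu}=\gamma'_{tu}$; (2) the closure of the subgroup generated by $\gamma$ contains $\gamma_{ts}$ and $\gamma_{tu}$; (3) if $G'$ is another Hausdorff topological group and $f:G\to G'$ is a continuous homomorphism, then $f(\gamma)=f(\gamma_{ts})f(\gamma_{tu})$ is a topological $p$-Jordan decomposition; (4) for $g\in G$, $g\gamma g^{-1}=(g\gamma_{ts}g^{-1})(g\gamma_{tu}g^{-1})$ is a topological $p$-Jordan decomposition.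
   Context: An element $\gamma$ of a topological group is absolutely $p$-semisimple if it has finite order coprime to $p$, and topologically $p$-unipotent if $\lim_{n\to\infty}\gamma^{p^n}=1$. A topological $p$-Jordan decomposition of $\gamma$ is a pair of commuting elements $(\gamma_{ts},\gamma_{tu})$ with $\gamma=\gamma_{ts}\gamma_{tu}$, $\gamma_{ts}$ absolutely $p$-semisimple and $\gamma_{tu}$ topologically $p$-unipotent. *)

theory Defs
  imports "HOL-Analysis.Analysis" "HOL-Algebra.Algebra"
begin

definition topological_group :: "('a, 'b) monoid_scheme \<Rightarrow> 'a topology \<Rightarrow> bool" where
  "topological_group G T \<longleftrightarrow> group G \<and> topspace T = carrier G \<and>
     continuous_map (prod_topology T T) T (\<lambda>(x, y). x \<otimes>\<^bsub>G\<^esub> y) \<and>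
     continuous_map T T (\<lambda>x. inv\<^bsub>G\<^esub> x)"

text \<open>Finite order coprime to p (group.ord is 0 for elements of infinite order).\<close>
definition abs_p_semisimple :: "('a, 'b) monoid_scheme \<Rightarrow> nat \<Rightarrow> 'a \<Rightarrow> bool" where
  "abs_p_semisimple G p x \<longleftrightarrow> x \<in> carrier G \<and> group.ord G x > 0 \<and> coprime (group.ord G x) p"

definition top_p_unipotent :: "('a, 'b) monoid_scheme \<Rightarrow> 'a topology \<Rightarrow> nat \<Rightarrow> 'a \<Rightarrow> bool" where
  "top_p_unipotent G T p x \<longleftrightarrow> x \<in> carrier G \<and>
     limitin T (\<lambda>n. x [^]\<^bsub>G\<^esub> (p ^ n)) \<one>\<^bsub>G\<^esub> sequentially"

definition top_p_jordan_decomp ::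
  "('a, 'b) monoid_scheme \<Rightarrow> 'a topology \<Rightarrow> nat \<Rightarrow> 'a \<Rightarrow> 'a \<Rightarrow> 'a \<Rightarrow> bool" where
  "top_p_jordan_decomp G T p g s u \<longleftrightarrow>
     s \<in> carrier G \<and> u \<in> carrier G \<and> s \<otimes>\<^bsub>G\<^esub> u = u \<otimes>\<^bsub>G\<^esub> s \<and>
     g = s \<otimes>\<^bsub>G\<^esub> u \<and> abs_p_semisimple G p s \<and> top_p_unipotent G T p u"

end

theory Submission
  imports Defs "HOL-Number_Theory.Number_Theory"
begin

text \<open>Let \<open>\<gamma> = s u\<close> with \<open>s\<close> of order \<open>m\<close> prime to \<open>p\<close>. Whenever \<open>\<phi>(m)\<close> divides \<open>K > 0\<close>,
  Euler's theorem gives \<open>p^K \<equiv> 1 (mod m)\<close>, so \<open>s^(p^(K n)) = s\<close> and, since \<open>s\<close> and \<open>u\<close>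
  commute, \<open>\<gamma>^(p^(K n)) = s u^(p^(K n)) \<rightarrow> s\<close>. Hence \<open>s\<close>, and with it \<open>u = s\<inverse> \<gamma>\<close>, is the
  limit of a sequence in \<open>\<langle>\<gamma>\<rangle>\<close> that depends on \<open>\<gamma>\<close> alone; choosing \<open>K\<close> good for two
  decompositions at once, uniqueness of limits in a Hausdorff space gives uniqueness.
  A continuous homomorphism \<open>f\<close> preserves the decomposition because the order of \<open>f s\<close>
  divides that of \<open>s\<close>, and conjugation is such a homomorphism.\<close>

lemma topological_group_group: "topological_group G T \<Longrightarrow> group G"
  by (simp add: topological_group_def)

lemma topological_group_topspace: "topological_group G T \<Longrightarrow> topspace T = carrier G"
  by (simp add: topological_group_def)

lemma continuous_map_group_mult:
  assumes "topological_group G T" "continuous_map Z T f" "continuous_map Z T g"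
  shows "continuous_map Z T (\<lambda>x. f x \<otimes>\<^bsub>G\<^esub> g x)"
proof -
  have "continuous_map Z (prod_topology T T) (\<lambda>x. (f x, g x))"
    using assms by (simp add: continuous_map_pairedI)
  moreover have "continuous_map (prod_topology T T) T (\<lambda>(x, y). x \<otimes>\<^bsub>G\<^esub> y)"
    using assms(1) by (simp add: topological_group_def)
  ultimately show ?thesis
    by (auto dest: continuous_map_compose simp: o_def)
qed

lemma continuous_map_group_inv:
  assumes "topological_group G T" "continuous_map Z T f"
  shows "continuous_map Z T (\<lambda>x. inv\<^bsub>G\<^esub> f x)"
proof -
  have "continuous_map T T (\<lambda>x. inv\<^bsub>G\<^esub> x)"
    using assms(1) by (simp add: topological_group_def)
  with assms(2) show ?thesis
    by (auto dest: continuous_map_compose simp: o_def)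
qed

lemma continuous_map_group_conj:
  assumes "topological_group G T" "g \<in> carrier G"
  shows "continuous_map T T (\<lambda>x. g \<otimes>\<^bsub>G\<^esub> x \<otimes>\<^bsub>G\<^esub> inv\<^bsub>G\<^esub> g)"
  using assms
  by (intro continuous_map_group_mult continuous_map_group_inv continuous_map_id [unfolded id_def])
     (auto simp: topological_group_topspace)

lemma limitin_in_closure_of:
  assumes "limitin T f l sequentially" "\<And>n. f n \<in> S"
  shows "l \<in> T closure_of S"
  using assms unfolding in_closure_of limitin_sequentially by (meson order_refl)

lemma euler_theorem_multiple:
  fixes a m :: nat
  assumes "coprime a m" "totient m dvd K"
  shows "[a ^ K = 1] (mod m)"
proof -
  obtain k where "K = totient m * k"
    using assms(2) by blast
  moreover have "[(a ^ totient m) ^ k = 1 ^ k] (mod m)"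
    using euler_theorem [OF assms(1)] by (rule cong_pow)
  ultimately show ?thesis
    by (simp add: power_mult)
qed

lemma (in group) nat_pow_mod_ord:
  assumes "x \<in> carrier G"
  shows "x [^] n = x [^] (n mod ord x)"
proof -
  have "x [^] n = x [^] (ord x * (n div ord x) + n mod ord x)"
    by simp
  also have "\<dots> = (x [^] ord x) [^] (n div ord x) \<otimes> x [^] (n mod ord x)"
    using nat_pow_mult [OF assms, of "ord x * (n div ord x)" "n mod ord x"]
      nat_pow_pow [OF assms, of "ord x" "n div ord x"] by simp
  also have "\<dots> = x [^] (n mod ord x)"
    using assms by simp
  finally show ?thesis .
qed

lemma (in group) nat_pow_cong_ord:
  assumes "x \<in> carrier G" "[m = n] (mod ord x)"
  shows "x [^] m = x [^] n"
proof -
  have "x [^] m = x [^] (m mod ord x)"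
    using assms(1) by (rule nat_pow_mod_ord)
  also have "\<dots> = x [^] (n mod ord x)"
    using assms(2) by (simp add: cong_def)
  also have "\<dots> = x [^] n"
    using assms(1) by (rule nat_pow_mod_ord [symmetric])
  finally show ?thesis .
qed

lemma ord_hom_dvd:
  assumes "group G" "group H" "f \<in> hom G H" "x \<in> carrier G"
  shows "group.ord H (f x) dvd group.ord G x"
proof -
  have "f x [^]\<^bsub>H\<^esub> group.ord G x = \<one>\<^bsub>H\<^esub>"
    using assms by (simp flip: hom_nat_pow hom_one add: group.pow_ord_eq_1)
  then show ?thesis
    using assms by (simp add: group.pow_eq_id hom_in_carrier)
qed

lemma (in group) conjugation_hom:
  assumes "g \<in> carrier G"
  shows "(\<lambda>x. g \<otimes> x \<otimes> inv g) \<in> hom G G"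
proof (rule homI)
  show "g \<otimes> x \<otimes> inv g \<in> carrier G" if "x \<in> carrier G" for x
    using assms that by simp
  have cancel: "inv g \<otimes> (g \<otimes> w) = w" if "w \<in> carrier G" for w
    using assms that by (simp add: m_assoc [symmetric])
  show "g \<otimes> (x \<otimes> y) \<otimes> inv g = (g \<otimes> x \<otimes> inv g) \<otimes> (g \<otimes> y \<otimes> inv g)"
    if "x \<in> carrier G" "y \<in> carrier G" for x y
    using assms that by (simp add: m_assoc cancel)
qed

lemma abs_p_semisimple_hom_image:
  assumes "group G" "group H" "f \<in> hom G H" "abs_p_semisimple G p x"
  shows "abs_p_semisimple H p (f x)"
proof -
  have x: "x \<in> carrier G" and "group.ord G x > 0" "coprime (group.ord G x) p"
    using assms(4) by (auto simp: abs_p_semisimple_def)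
  moreover have "group.ord H (f x) dvd group.ord G x"
    using assms(1-3) x by (rule ord_hom_dvd)
  ultimately have "group.ord H (f x) > 0" "coprime (group.ord H (f x)) p"
    by (auto intro: dvd_pos_nat coprime_divisors [OF _ dvd_refl])
  then show ?thesis
    using hom_in_carrier [OF assms(3) x] by (simp add: abs_p_semisimple_def)
qed

lemma top_p_unipotent_hom_image:
  assumes "group G" "group H" "f \<in> hom G H" "continuous_map T T' f" "top_p_unipotent G T p x"
  shows "top_p_unipotent H T' p (f x)"
proof -
  have x: "x \<in> carrier G" and lim: "limitin T (\<lambda>n. x [^]\<^bsub>G\<^esub> (p ^ n)) \<one>\<^bsub>G\<^esub> sequentially"
    using assms(5) by (auto simp: top_p_unipotent_def)
  have "limitin T' (f \<circ> (\<lambda>n. x [^]\<^bsub>G\<^esub> (p ^ n))) (f \<one>\<^bsub>G\<^esub>) sequentially"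
    using assms(4) lim by (rule continuous_map_limit)
  then have "limitin T' (\<lambda>n. f x [^]\<^bsub>H\<^esub> (p ^ n)) \<one>\<^bsub>H\<^esub> sequentially"
    using hom_nat_pow [OF assms(3) x assms(1,2)] hom_one [OF assms(3,1,2)] by (simp add: o_def)
  then show ?thesis
    using hom_in_carrier [OF assms(3) x] by (simp add: top_p_unipotent_def)
qed

lemma top_p_jordan_decomp_hom_image:
  assumes "group G" "group H" "f \<in> hom G H" "continuous_map T T' f"
    and "top_p_jordan_decomp G T p \<gamma> s u"
  shows "top_p_jordan_decomp H T' p (f \<gamma>) (f s) (f u)"
  using assms abs_p_semisimple_hom_image top_p_unipotent_hom_image
  by (auto simp: top_p_jordan_decomp_def hom_in_carrier simp flip: hom_mult)

lemma (in group) top_p_jordan_decomp_unipotent_eq: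
  assumes "top_p_jordan_decomp G T p \<gamma> s u"
  shows "u = inv s \<otimes> \<gamma>"
proof -
  have "s \<in> carrier G" "u \<in> carrier G" "\<gamma> = s \<otimes> u"
    using assms by (auto simp: top_p_jordan_decomp_def)
  then show ?thesis
    by (simp add: inv_solve_left)
qed

lemma (in group) top_p_jordan_decomp_semisimple_limit:
  assumes tg: "topological_group G T" and d: "top_p_jordan_decomp G T p \<gamma> s u"
    and K: "K > 0" "[p ^ K = 1] (mod ord s)"
  shows "limitin T (\<lambda>n. \<gamma> [^] (p ^ (K * n))) s sequentially"
proof -
  have s: "s \<in> carrier G" and u: "u \<in> carrier G" and comm: "s \<otimes> u = u \<otimes> s"
    and \<gamma>: "\<gamma> = s \<otimes> u" and lim_u: "limitin T (\<lambda>n. u [^] (p ^ n)) \<one> sequentially"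
    using d by (auto simp: top_p_jordan_decomp_def top_p_unipotent_def)
  have "[(p ^ K) ^ n = 1 ^ n] (mod ord s)" for n
    using K(2) by (rule cong_pow)
  then have "s [^] (p ^ (K * n)) = s" for n
    using nat_pow_cong_ord [OF s, of "p ^ (K * n)" 1] s by (simp add: power_mult)
  then have pow_\<gamma>: "\<gamma> [^] (p ^ (K * n)) = s \<otimes> u [^] (p ^ (K * n))" for n
    using \<gamma> pow_mult_distrib [OF comm s u] by simp
  have "limitin T (\<lambda>n. u [^] (p ^ (K * n))) \<one> sequentially"
    using limitin_subsequence [OF _ lim_u, of "\<lambda>n. K * n"] K(1)
    by (simp add: strict_mono_def o_def)
  moreover have "continuous_map T T (\<lambda>x. s \<otimes> x)"
    using tg s
    by (intro continuous_map_group_mult continuous_map_id [unfolded id_def])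
       (auto simp: topological_group_topspace)
  ultimately have "limitin T ((\<lambda>x. s \<otimes> x) \<circ> (\<lambda>n. u [^] (p ^ (K * n)))) (s \<otimes> \<one>) sequentially"
    by (intro continuous_map_limit)
  then show ?thesis
    using s by (simp add: o_def pow_\<gamma>)
qed

lemma (in group) top_p_jordan_decomp_unipotent_limit:
  assumes tg: "topological_group G T" and d: "top_p_jordan_decomp G T p \<gamma> s u"
    and K: "K > 0" "[p ^ K = 1] (mod ord s)"
  shows "limitin T (\<lambda>n. inv (\<gamma> [^] (p ^ (K * n))) \<otimes> \<gamma>) u sequentially"
proof -
  have "\<gamma> \<in> carrier G"
    using d by (auto simp: top_p_jordan_decomp_def)
  then have "continuous_map T T (\<lambda>x. inv x \<otimes> \<gamma>)"
    using tg
    by (intro continuous_map_group_mult continuous_map_group_inv continuous_map_id [unfolded id_def])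
       (auto simp: topological_group_topspace)
  from continuous_map_limit [OF this top_p_jordan_decomp_semisimple_limit [OF tg d K]]
  show ?thesis
    using top_p_jordan_decomp_unipotent_eq [OF d] by (simp add: o_def)
qed

lemma (in group) top_p_jordan_decomp_in_closure:
  assumes tg: "topological_group G T" and d: "top_p_jordan_decomp G T p \<gamma> s u"
  shows "s \<in> T closure_of generate G {\<gamma>}" "u \<in> T closure_of generate G {\<gamma>}"
proof -
  have "\<gamma> \<in> carrier G" "ord s > 0" "coprime p (ord s)"
    using d by (auto simp: top_p_jordan_decomp_def abs_p_semisimple_def coprime_commute)
  then have K: "totient (ord s) > 0" "[p ^ totient (ord s) = 1] (mod ord s)"
    by (simp_all only: totient_gt_0_iff euler_theorem)
  have H: "subgroup (generate G {\<gamma>}) G" "\<gamma> \<in> generate G {\<gamma>}"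
    using \<open>\<gamma> \<in> carrier G\<close> by (auto intro: generate_is_subgroup generate.incl)
  then have pow_in_H: "\<gamma> [^] (n::nat) \<in> generate G {\<gamma>}" for n
    by (metis int_pow_int subgroup_int_pow_closed)
  show "s \<in> T closure_of generate G {\<gamma>}"
    by (rule limitin_in_closure_of [OF top_p_jordan_decomp_semisimple_limit [OF tg d K] pow_in_H])
  show "u \<in> T closure_of generate G {\<gamma>}"
  proof (rule limitin_in_closure_of [OF top_p_jordan_decomp_unipotent_limit [OF tg d K]])
    show "inv (\<gamma> [^] (p ^ (totient (ord s) * n))) \<otimes> \<gamma> \<in> generate G {\<gamma>}" for n
      using H pow_in_H by (simp add: subgroup.m_closed subgroup.m_inv_closed)
  qed
qed

lemma (in group) top_p_jordan_decomp_unique: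
  assumes tg: "topological_group G T" and "Hausdorff_space T"
    and d: "top_p_jordan_decomp G T p \<gamma> s u" and d': "top_p_jordan_decomp G T p \<gamma> s' u'"
  shows "s = s' \<and> u = u'"
proof -
  define K where "K = totient (ord s) * totient (ord s')"
  have "ord s > 0" "coprime p (ord s)" "ord s' > 0" "coprime p (ord s')"
    using d d' by (auto simp: top_p_jordan_decomp_def abs_p_semisimple_def coprime_commute)
  then have K: "K > 0" "[p ^ K = 1] (mod ord s)" "[p ^ K = 1] (mod ord s')"
    unfolding K_def by (simp_all only: mult_pos_pos totient_gt_0_iff euler_theorem_multiple
        dvd_triv_left dvd_triv_right)
  have "s = s'"
    using top_p_jordan_decomp_semisimple_limit [OF tg d K(1,2)]
      top_p_jordan_decomp_semisimple_limit [OF tg d' K(1,3)]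
      trivial_limit_sequentially \<open>Hausdorff_space T\<close>
    by (rule limitin_Hausdorff_unique)
  then show ?thesis
    using top_p_jordan_decomp_unipotent_eq [OF d] top_p_jordan_decomp_unipotent_eq [OF d']
    by simp
qed

theorem proposition1p7:
  fixes G :: "('a, 'b) monoid_scheme" and T :: "'a topology"
    and G' :: "('c, 'd) monoid_scheme" and T' :: "'c topology"
    and p :: nat and \<gamma> s u :: 'a
  assumes "Factorial_Ring.prime p"
    and "topological_group G T" and "Hausdorff_space T"
    and "top_p_jordan_decomp G T p \<gamma> s u"
  shows "(\<forall>s' u'. top_p_jordan_decomp G T p \<gamma> s' u' \<longrightarrow> s = s' \<and> u = u')
    \<and> (s \<in> T closure_of (generate G {\<gamma>}) \<and> u \<in> T closure_of (generate G {\<gamma>}))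
    \<and> (topological_group G' T' \<and> Hausdorff_space T' \<longrightarrow>
         (\<forall>f. f \<in> hom G G' \<and> continuous_map T T' f \<longrightarrow>
              f \<gamma> = f s \<otimes>\<^bsub>G'\<^esub> f u \<and> top_p_jordan_decomp G' T' p (f \<gamma>) (f s) (f u)))
    \<and> (\<forall>g \<in> carrier G.
         top_p_jordan_decomp G T p (g \<otimes>\<^bsub>G\<^esub> \<gamma> \<otimes>\<^bsub>G\<^esub> inv\<^bsub>G\<^esub> g)
           (g \<otimes>\<^bsub>G\<^esub> s \<otimes>\<^bsub>G\<^esub> inv\<^bsub>G\<^esub> g) (g \<otimes>\<^bsub>G\<^esub> u \<otimes>\<^bsub>G\<^esub> inv\<^bsub>G\<^esub> g))"
proof -
  note tg = assms(2) and d = assms(4)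
  have G: "group G"
    using tg by (rule topological_group_group)
  have image: "f \<gamma> = f s \<otimes>\<^bsub>G'\<^esub> f u \<and> top_p_jordan_decomp G' T' p (f \<gamma>) (f s) (f u)"
    if "topological_group G' T'" "f \<in> hom G G'" "continuous_map T T' f" for f
    using top_p_jordan_decomp_hom_image [OF G topological_group_group [OF that(1)] that(2,3) d]
    by (simp add: top_p_jordan_decomp_def)
  have conjugate: "top_p_jordan_decomp G T p (g \<otimes>\<^bsub>G\<^esub> \<gamma> \<otimes>\<^bsub>G\<^esub> inv\<^bsub>G\<^esub> g)
      (g \<otimes>\<^bsub>G\<^esub> s \<otimes>\<^bsub>G\<^esub> inv\<^bsub>G\<^esub> g) (g \<otimes>\<^bsub>G\<^esub> u \<otimes>\<^bsub>G\<^esub> inv\<^bsub>G\<^esub> g)" if "g \<in> carrier G" for g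
    using top_p_jordan_decomp_hom_image [OF G G group.conjugation_hom [OF G that]
        continuous_map_group_conj [OF tg that] d] .
  show ?thesis
    using group.top_p_jordan_decomp_unique [OF G tg assms(3) d]
      group.top_p_jordan_decomp_in_closure [OF G tg d] image conjugate
    by blast
qed

end
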